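(* Let $\tilde F:E^c\to E^c$ be $\Gamma$-equivariant, and let $f$ and $h$ denote its $z_1$- and $w_1$-components, respectively (so $\tilde F=[f,h]$). Then $R_\phi\tilde F(\Phi)=\tilde F(R_\phi\Phi)$ for all $\Phi\in E^c\cap R_{-\phi}E^c=\{(z_1,z_2,0,w_2,w_3,0)\}$ if and only if $$f(z_1,z_2,0,w_2,w_3,0)=h(w_2,w_3,z_1,0,0,\bar z_2)\quad\text{for all }z_1,z_2,w_2,w_3\in\mathbb C,$$ equivalently $h(z_1,z_2,w_1,0,0,w_4)=f(w_1,\bar w_4,0,z_1,z_2,0)$ for all $z_1,z_2,w_1,w_4$.
   Context: $[4,8]$ mode interaction: integers $l_1>l_2>n_2>0$ with $l_1^2=l_2^2+n_2^2$. Wave vectors $q_1=(l_1,0)$, $q_2=(0,l_1)$, $p_1=(l_2,n_2)$, $p_2=(l_2,-n_2)$, $p_3=(n_2,l_2)$, $p_4=(n_2,-l_2)$; $\tilde A=\{\pm q_i,\pm p_j\}$. $E^c$ is the real space of functions $a$ supported in $\tilde A$ with $a(-k)=\overline{a(k)}$, with coordinates $(z_1,z_2,w_1,\dots,w_4)$, $z_i=a(q_i)$, $w_j=a(p_j)$. Group actions on functions: $(\gamma a)(k)=a(\gamma^{-1}k)$ for $\gamma\in O(2)$, $(T_{s,t}a)(k)=e^{-i(sk_x+tk_y)}a(k)$; $R_\theta$ = counterclockwise rotation by $\theta$; $\phi=\arctan(n_2/l_2)$ (so $R_\phi q_1=p_1$). $\Gamma=D_4\dot+T^2$ is generated by $\gamma_1(x,y)=(-x,y)$,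 $\gamma_2(x,y)=(y,x)$ and translations with $(s,t)\in(\mathbb R/2\pi\mathbb Z)^2$. *)

theory Defs
  imports "HOL-Analysis.Analysis"
begin

type_synonym wvec = "real \<times> real"
type_synonym wfun = "wvec \<Rightarrow> complex"

definition q1 :: "int \<Rightarrow> wvec" where "q1 l1 = (of_int l1, 0)"
definition q2 :: "int \<Rightarrow> wvec" where "q2 l1 = (0, of_int l1)"
definition p1 :: "int \<Rightarrow> int \<Rightarrow> wvec" where "p1 l2 n2 = (of_int l2, of_int n2)"
definition p2 :: "int \<Rightarrow> int \<Rightarrow> wvec" where "p2 l2 n2 = (of_int l2, - of_int n2)"
definition p3 :: "int \<Rightarrow> int \<Rightarrow> wvec" where "p3 l2 n2 = (of_int n2, of_int l2)"
definition p4 :: "int \<Rightarrow> int \<Rightarrow> wvec" where "p4 l2 n2 = (of_int n2, - of_int l2)"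

definition Atilde :: "int \<Rightarrow> int \<Rightarrow> int \<Rightarrow> wvec set" where
  "Atilde l1 l2 n2 =
     (let B = {q1 l1, q2 l1, p1 l2 n2, p2 l2 n2, p3 l2 n2, p4 l2 n2} in B \<union> uminus ` B)"

definition Ec :: "int \<Rightarrow> int \<Rightarrow> int \<Rightarrow> wfun set" where
  "Ec l1 l2 n2 = {a. (\<forall>k. k \<notin> Atilde l1 l2 n2 \<longrightarrow> a k = 0) \<and> (\<forall>k. a (- k) = cnj (a k))}"

definition emb :: "int \<Rightarrow> int \<Rightarrow> int \<Rightarrow> complex \<Rightarrow> complex \<Rightarrow> complex \<Rightarrow> complex
    \<Rightarrow> complex \<Rightarrow> complex \<Rightarrow> wfun" where
  "emb l1 l2 n2 z1 z2 w1 w2 w3 w4 = (\<lambda>k.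
     if k = q1 l1 then z1 else if k = - q1 l1 then cnj z1
     else if k = q2 l1 then z2 else if k = - q2 l1 then cnj z2
     else if k = p1 l2 n2 then w1 else if k = - p1 l2 n2 then cnj w1
     else if k = p2 l2 n2 then w2 else if k = - p2 l2 n2 then cnj w2
     else if k = p3 l2 n2 then w3 else if k = - p3 l2 n2 then cnj w3
     else if k = p4 l2 n2 then w4 else if k = - p4 l2 n2 then cnj w4
     else 0)"

definition rot :: "real \<Rightarrow> wvec \<Rightarrow> wvec" where
  "rot \<theta> k = (cos \<theta> * fst k - sin \<theta> * snd k, sin \<theta> * fst k + cos \<theta> * snd k)"

definition rot_act :: "real \<Rightarrow> wfun \<Rightarrow> wfun" where
  "rot_act \<theta> a = (\<lambda>k. a (rot (- \<theta>) k))"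

definition lin_act :: "(wvec \<Rightarrow> wvec) \<Rightarrow> wfun \<Rightarrow> wfun" where
  "lin_act g a = (\<lambda>k. a (inv g k))"

definition gamma1 :: "wvec \<Rightarrow> wvec" where "gamma1 k = (- fst k, snd k)"
definition gamma2 :: "wvec \<Rightarrow> wvec" where "gamma2 k = (snd k, fst k)"

definition trans_act :: "real \<Rightarrow> real \<Rightarrow> wfun \<Rightarrow> wfun" where
  "trans_act s t a = (\<lambda>k. exp (- \<i> * complex_of_real (s * fst k + t * snd k)) * a k)"

text \<open>Gamma = D4 + T^2 equivariance on E^c: commuting with the generators
  gamma1, gamma2 and all translations T_{s,t}.\<close>
definition Gamma_equivariant :: "int \<Rightarrow> int \<Rightarrow> int \<Rightarrow> (wfun \<Rightarrow> wfun) \<Rightarrow> bool" where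
  "Gamma_equivariant l1 l2 n2 F \<longleftrightarrow>
     (\<forall>a\<in>Ec l1 l2 n2. F (lin_act gamma1 a) = lin_act gamma1 (F a)) \<and>
     (\<forall>a\<in>Ec l1 l2 n2. F (lin_act gamma2 a) = lin_act gamma2 (F a)) \<and>
     (\<forall>s t. \<forall>a\<in>Ec l1 l2 n2. F (trans_act s t a) = trans_act s t (F a))"

definition phi :: "int \<Rightarrow> int \<Rightarrow> real" where
  "phi l2 n2 = arctan (of_int n2 / of_int l2)"

definition f_comp :: "int \<Rightarrow> int \<Rightarrow> int \<Rightarrow> (wfun \<Rightarrow> wfun) \<Rightarrow> complex \<Rightarrow> complex \<Rightarrow> complex
    \<Rightarrow> complex \<Rightarrow> complex \<Rightarrow> complex \<Rightarrow> complex" where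
  "f_comp l1 l2 n2 F z1 z2 w1 w2 w3 w4 = F (emb l1 l2 n2 z1 z2 w1 w2 w3 w4) (q1 l1)"

definition h_comp :: "int \<Rightarrow> int \<Rightarrow> int \<Rightarrow> (wfun \<Rightarrow> wfun) \<Rightarrow> complex \<Rightarrow> complex \<Rightarrow> complex
    \<Rightarrow> complex \<Rightarrow> complex \<Rightarrow> complex \<Rightarrow> complex" where
  "h_comp l1 l2 n2 F z1 z2 w1 w2 w3 w4 = F (emb l1 l2 n2 z1 z2 w1 w2 w3 w4) (p1 l2 n2)"

end

theory Submission
  imports Defs
begin

text \<open>
  Rotation by \<open>\<phi>\<close> maps \<open>q1, q2, p2, p3\<close> to \<open>p1, -p4, q1, q2\<close>, but moves \<open>p1\<close>
  and \<open>p4\<close> out of \<open>Atilde\<close>: otherwise \<open>l1 = 2 n2\<close> or \<open>l1 = 2 l2\<close>, which is ruled out by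
  reducing to a primitive triple \<open>(a, b, c)\<close>, where \<open>a\<close> cannot divide \<open>b\<^sup>2 - c\<^sup>2\<close>. This
  gives the intersection \<open>E\<^sup>c \<inter> R\<^sub>-\<^sub>\<phi> E\<^sup>c\<close>, and \<open>R\<^sub>\<phi>\<close> maps
  \<open>\<Phi> = (z1, z2, 0, w2, w3, 0)\<close> to \<open>(w2, w3, z1, 0, 0, z2\<^sup>*)\<close>.

  The same divisibility fact yields translations that fix all modes of a vector with
  \<open>w2 = w3 = 0\<close> but act nontrivially on \<open>p2\<close> resp. \<open>p3\<close>; by translation equivariance
  \<open>F\<close> preserves that subspace, and by \<open>\<gamma>1\<close>-equivariance also the subspace
  \<open>w1 = w4 = 0\<close>. Hence \<open>R\<^sub>\<phi>(F \<Phi>)\<close> and \<open>F(R\<^sub>\<phi> \<Phi>)\<close> agree iff four coordinate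
  identities hold. The first is \<open>f = h\<close>; the reflections \<open>\<gamma>1, \<gamma>2\<close>, which conjugate
  \<open>R\<^sub>\<phi>\<close> into \<open>R\<^sub>-\<^sub>\<phi>\<close>, derive the other three from it.
\<close>

lemma primitive_pythagorean_not_dvd:
  fixes a b c :: int
  assumes "coprime b c" and "a^2 = b^2 + c^2" and "2 < a"
  shows "\<not> a dvd b^2 - c^2"
proof
  assume "a dvd b^2 - c^2"
  then have "a dvd (b^2 - c^2) + a^2" by (simp add: power2_eq_square)
  then have "a dvd 2 * b^2" using assms(2) by (simp add: algebra_simps)
  moreover have "coprime a (b^2)"
  proof -
    have "coprime (b^2) (c^2)" using assms(1) by simp
    then have "coprime (b^2) (b^2 + c^2)" by (simp add: coprime_iff_gcd_eq_1)
    then have "coprime (b^2) (a^2)" using assms(2) by simp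
    then show ?thesis by (simp add: coprime_commute)
  qed
  ultimately have "a dvd 2" by (simp add: coprime_dvd_mult_left_iff)
  with \<open>2 < a\<close> show False using zdvd_imp_le by fastforce
qed

lemma pythagorean_not_dvd:
  fixes l1 l2 n2 :: int
  assumes "l1^2 = l2^2 + n2^2" and "0 < l1" and "0 < n2" and "n2 < l2"
  shows "\<not> l1 * gcd l2 n2 dvd l2^2 - n2^2"
proof
  assume dvd: "l1 * gcd l2 n2 dvd l2^2 - n2^2"
  define d where "d = gcd l2 n2"
  define b where "b = l2 div d"
  define c where "c = n2 div d"
  have "0 < d" using assms(3) by (simp add: d_def)
  have l2: "l2 = d * b" and n2: "n2 = d * c" by (simp_all add: b_def c_def d_def)
  have "coprime b c" unfolding b_def c_def d_def using assms(3) by (intro div_gcd_coprime) simp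
  have "d^2 dvd l1^2" using assms(1) by (simp add: l2 n2 power_mult_distrib)
  then obtain a where l1: "l1 = d * a" using pow_divides_pow_iff[of 2 d l1] by (auto simp: dvd_def)
  have "d^2 * a^2 = d^2 * (b^2 + c^2)"
    using assms(1) by (simp add: l1 l2 n2 algebra_simps)
  then have pyth: "a^2 = b^2 + c^2" using \<open>0 < d\<close> by simp
  have "0 < c" "c < b" using assms(3,4) \<open>0 < d\<close> by (auto simp: l2 n2 zero_less_mult_iff)
  moreover have "b < a"
  proof (rule power_less_imp_less_base)
    show "b^2 < a^2" using pyth \<open>0 < c\<close> by simp
    show "0 \<le> a" using assms(2) \<open>0 < d\<close> by (simp add: l1 zero_less_mult_iff)
  qed
  ultimately have "2 < a" by linarith
  have "d^2 * a dvd d^2 * (b^2 - c^2)"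
    using dvd unfolding d_def[symmetric] by (simp add: l1 l2 n2 power2_eq_square algebra_simps)
  then have "a dvd b^2 - c^2" using \<open>0 < d\<close> by simp
  then show False using primitive_pythagorean_not_dvd[OF \<open>coprime b c\<close> pyth \<open>2 < a\<close>] by contradiction
qed

lemma rot_rot: "rot \<alpha> (rot \<beta> k) = rot (\<alpha> + \<beta>) k"
  by (simp add: rot_def cos_add sin_add algebra_simps)

lemma rot_zero [simp]: "rot 0 k = k"
  by (simp add: rot_def)

lemma rot_act_zero [simp]: "rot_act 0 a = a"
  by (simp add: rot_act_def)

lemma rot_uminus: "rot \<theta> (- k) = - rot \<theta> k"
  by (simp add: rot_def)

lemma rot_act_rot_act: "rot_act \<alpha> (rot_act \<beta> a) = rot_act (\<alpha> + \<beta>) a"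
  by (simp add: rot_act_def rot_rot add.commute)

lemma rot_act_eqI:
  assumes "\<And>j. j \<in> S \<Longrightarrow> a j = b (rot \<theta> j)"
    and "\<And>j. a j \<noteq> 0 \<Longrightarrow> j \<in> S"
    and "\<And>k. b k \<noteq> 0 \<Longrightarrow> k \<in> rot \<theta> ` S"
  shows "rot_act \<theta> a = b"
proof
  fix k
  have k: "rot \<theta> (rot (- \<theta>) k) = k" by (simp add: rot_rot)
  show "rot_act \<theta> a k = b k"
  proof (cases "rot (- \<theta>) k \<in> S")
    case True
    then show ?thesis using assms(1) k by (simp add: rot_act_def)
  next
    case False
    then have "k \<notin> rot \<theta> ` S" by (auto simp: rot_rot)
    then show ?thesis using False assms(2,3) by (metis rot_act_def)
  qed
qed

lemma inv_gamma1 [simp]: "inv gamma1 = gamma1"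
  by (rule inv_unique_comp) (auto simp: gamma1_def fun_eq_iff)

lemma inv_gamma2 [simp]: "inv gamma2 = gamma2"
  by (rule inv_unique_comp) (auto simp: gamma2_def fun_eq_iff)

definition trans_character :: "real \<Rightarrow> real \<Rightarrow> wvec \<Rightarrow> complex" where
  "trans_character s t k = exp (- \<i> * complex_of_real (s * fst k + t * snd k))"

lemma trans_act_eq: "trans_act s t a = (\<lambda>k. trans_character s t k * a k)"
  by (simp add: trans_act_def trans_character_def)

lemma trans_character_uminus: "trans_character s t (- k) = cnj (trans_character s t k)"
  by (simp add: trans_character_def exp_cnj algebra_simps)

lemma exp_minus_2pi_i_eq_1_iff:
  "exp (- \<i> * complex_of_real (2 * pi * x)) = 1 \<longleftrightarrow> x \<in> \<int>"
proof -
  have "- (pi * x) = pi * of_int n \<longleftrightarrow> x = of_int (- n)" for n :: int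
    using pi_neq_zero by (metis minus_minus mult_cancel_left mult_minus_right of_int_minus)
  then have "exp (- \<i> * complex_of_real (2 * pi * x)) = 1 \<longleftrightarrow> (\<exists>n::int. x = of_int (- n))"
    by (simp add: exp_eq_1)
  also have "\<dots> \<longleftrightarrow> x \<in> \<int>"
    by (metis Ints_cases Ints_of_int minus_minus)
  finally show ?thesis .
qed

lemma trans_character_lattice_eq_1_iff:
  fixes N m n u v :: int
  assumes "N \<noteq> 0"
  shows "trans_character (2 * pi * m / N) (2 * pi * n / N) (of_int u, of_int v) = 1
    \<longleftrightarrow> N dvd m * u + n * v"
proof -
  have "2 * pi * m / N * of_int u + 2 * pi * n / N * of_int v
      = 2 * pi * (of_int (m * u + n * v) / of_int N)"
    by (simp add: add_divide_distrib algebra_simps)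
  then have "trans_character (2 * pi * m / N) (2 * pi * n / N) (of_int u, of_int v)
      = exp (- \<i> * complex_of_real (2 * pi * (of_int (m * u + n * v) / of_int N)))"
    by (simp only: trans_character_def fst_conv snd_conv)
  then show ?thesis
    using assms by (simp only: exp_minus_2pi_i_eq_1_iff of_int_div_of_int_in_Ints_iff) simp
qed

lemma Ec_vanishes: "a \<in> Ec l1 l2 n2 \<Longrightarrow> k \<notin> Atilde l1 l2 n2 \<Longrightarrow> a k = 0"
  and Ec_uminus: "a \<in> Ec l1 l2 n2 \<Longrightarrow> a (- k) = cnj (a k)"
  unfolding Ec_def by blast+

lemma Ec_comp:
  assumes "a \<in> Ec l1 l2 n2" and "\<And>k. g (- k) = - g k"
    and "\<And>k. g k \<in> Atilde l1 l2 n2 \<Longrightarrow> k \<in> Atilde l1 l2 n2"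
  shows "(\<lambda>k. a (g k)) \<in> Ec l1 l2 n2"
  unfolding Ec_def mem_Collect_eq
proof (intro conjI allI impI)
  fix k
  assume "k \<notin> Atilde l1 l2 n2"
  then show "a (g k) = 0" using assms(3) Ec_vanishes[OF assms(1)] by blast
next
  fix k
  show "a (g (- k)) = cnj (a (g k))" by (simp add: assms(2) Ec_uminus[OF assms(1)])
qed

locale pythagorean_modes =
  fixes l1 l2 n2 :: int
  assumes l2_less_l1: "l2 < l1" and n2_less_l2: "n2 < l2" and n2_pos: "0 < n2"
    and pythagorean: "l1^2 = l2^2 + n2^2"
begin

abbreviation "E \<equiv> emb l1 l2 n2"
abbreviation "Q1 \<equiv> q1 l1"
abbreviation "Q2 \<equiv> q2 l1"
abbreviation "P1 \<equiv> p1 l2 n2"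
abbreviation "P2 \<equiv> p2 l2 n2"
abbreviation "P3 \<equiv> p3 l2 n2"
abbreviation "P4 \<equiv> p4 l2 n2"
abbreviation "\<phi> \<equiv> phi l2 n2"

lemmas wave_vector_defs = q1_def q2_def p1_def p2_def p3_def p4_def

lemma real_pythagorean:
  "0 < real_of_int n2" "real_of_int n2 < of_int l2" "real_of_int l2 < of_int l1"
  "(real_of_int l1)^2 = (of_int l2)^2 + (of_int n2)^2"
  using n2_pos n2_less_l2 l2_less_l1 arg_cong[OF pythagorean, of real_of_int] by simp_all

lemma emb_apply [simp]:
  "E z1 z2 w1 w2 w3 w4 Q1 = z1" "E z1 z2 w1 w2 w3 w4 (- Q1) = cnj z1"
  "E z1 z2 w1 w2 w3 w4 Q2 = z2" "E z1 z2 w1 w2 w3 w4 (- Q2) = cnj z2"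
  "E z1 z2 w1 w2 w3 w4 P1 = w1" "E z1 z2 w1 w2 w3 w4 (- P1) = cnj w1"
  "E z1 z2 w1 w2 w3 w4 P2 = w2" "E z1 z2 w1 w2 w3 w4 (- P2) = cnj w2"
  "E z1 z2 w1 w2 w3 w4 P3 = w3" "E z1 z2 w1 w2 w3 w4 (- P3) = cnj w3"
  "E z1 z2 w1 w2 w3 w4 P4 = w4" "E z1 z2 w1 w2 w3 w4 (- P4) = cnj w4"
  using real_pythagorean(1-3) by (simp_all add: emb_def wave_vector_defs)

lemma Atilde_eq:
  "Atilde l1 l2 n2 = {Q1, - Q1, Q2, - Q2, P1, - P1, P2, - P2, P3, - P3, P4, - P4}"
  by (auto simp: Atilde_def Let_def)

lemma emb_support: "E z1 z2 w1 w2 w3 w4 k \<noteq> 0 \<Longrightarrow> k \<in> Atilde l1 l2 n2"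
  unfolding Atilde_eq emb_def by (auto split: if_splits)

lemma emb_w1_w4_zero_support:
  "E z1 z2 0 w2 w3 0 k \<noteq> 0 \<Longrightarrow> k \<in> {Q1, - Q1, Q2, - Q2, P2, - P2, P3, - P3}"
  unfolding emb_def by (auto split: if_splits)

lemma emb_w2_w3_zero_support:
  "E z1 z2 w1 0 0 w4 k \<noteq> 0 \<Longrightarrow> k \<in> {Q1, - Q1, Q2, - Q2, P1, - P1, P4, - P4}"
  unfolding emb_def by (auto split: if_splits)

lemma emb_in_Ec: "E z1 z2 w1 w2 w3 w4 \<in> Ec l1 l2 n2"
proof -
  have "E z1 z2 w1 w2 w3 w4 (- k) = cnj (E z1 z2 w1 w2 w3 w4 k)" for k
  proof (cases "k \<in> Atilde l1 l2 n2")
    case True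
    then show ?thesis unfolding Atilde_eq by auto
  next
    case False
    then have "- k \<notin> Atilde l1 l2 n2" unfolding Atilde_eq by (auto simp: minus_equation_iff[of k])
    then show ?thesis using False emb_support by (metis complex_cnj_zero)
  qed
  then show ?thesis unfolding Ec_def using emb_support by blast
qed

lemma Ec_eq_emb:
  assumes "a \<in> Ec l1 l2 n2"
  shows "a = E (a Q1) (a Q2) (a P1) (a P2) (a P3) (a P4)"
proof
  fix k
  show "a k = E (a Q1) (a Q2) (a P1) (a P2) (a P3) (a P4) k"
  proof (cases "k \<in> Atilde l1 l2 n2")
    case True
    then show ?thesis unfolding Atilde_eq by (auto simp: Ec_uminus[OF assms])
  next
    case False
    then have "a k = 0" by (rule Ec_vanishes[OF assms])
    moreover have "E (a Q1) (a Q2) (a P1) (a P2) (a P3) (a P4) k = 0"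
      using False emb_support by blast
    ultimately show ?thesis by simp
  qed
qed

lemma emb_eq_iff:
  "E z1 z2 w1 w2 w3 w4 = E z1' z2' w1' w2' w3' w4'
    \<longleftrightarrow> z1 = z1' \<and> z2 = z2' \<and> w1 = w1' \<and> w2 = w2' \<and> w3 = w3' \<and> w4 = w4'"
  by (metis emb_apply(1,3,5,7,9,11))

lemma cos_phi: "cos \<phi> = of_int l2 / of_int l1"
  and sin_phi: "sin \<phi> = of_int n2 / of_int l1"
proof -
  have "1 + (of_int n2 / of_int l2)^2 = (of_int l1 / of_int l2 :: real)^2"
    using real_pythagorean by (simp add: field_simps)
  then have "sqrt (1 + (of_int n2 / of_int l2)^2) = of_int l1 / of_int l2"
    using real_pythagorean by simp
  then show "cos \<phi> = of_int l2 / of_int l1" "sin \<phi> = of_int n2 / of_int l1"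
    unfolding phi_def cos_arctan sin_arctan using real_pythagorean by auto
qed

lemma rot_phi_wave_vectors:
  "rot \<phi> Q1 = P1" "rot \<phi> Q2 = - P4" "rot \<phi> P2 = Q1" "rot \<phi> P3 = Q2"
  using real_pythagorean
  by (auto simp: rot_def cos_phi sin_phi wave_vector_defs field_simps power2_eq_square)

lemma rot_phi_p1:
  "rot \<phi> P1 = ((of_int l2^2 - of_int n2^2) / of_int l1, 2 * of_int l2 * of_int n2 / of_int l1)"
  and rot_phi_p4:
  "rot \<phi> P4 = (2 * of_int l2 * of_int n2 / of_int l1, (of_int n2^2 - of_int l2^2) / of_int l1)"
  using real_pythagorean
  by (auto simp: rot_def cos_phi sin_phi wave_vector_defs field_simps power2_eq_square)

lemma gcd_dvd_l1: "gcd l2 n2 dvd l1"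
proof -
  have "(gcd l2 n2)^2 dvd l1^2" using pythagorean by (simp add: power2_eq_square mult_dvd_mono)
  then show ?thesis using pow_divides_pow_iff[of 2] by simp
qed

lemma l1_gcd_not_dvd: "\<not> l1 * gcd l2 n2 dvd l2^2 - n2^2"
  using pythagorean_not_dvd pythagorean l2_less_l1 n2_less_l2 n2_pos by simp

lemma l1_neq_double: "l1 \<noteq> 2 * n2" "l1 \<noteq> 2 * l2"
proof -
  show "l1 \<noteq> 2 * n2"
  proof
    assume "l1 = 2 * n2"
    then have "l2^2 - n2^2 = l1 * n2" using pythagorean by (simp add: power2_eq_square)
    then show False using l1_gcd_not_dvd by (simp add: mult_dvd_mono)
  qed
  show "l1 \<noteq> 2 * l2"
  proof
    assume "l1 = 2 * l2"
    then have "l2^2 - n2^2 = l1 * (- l2)" using pythagorean by (simp add: power2_eq_square)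
    then show False using l1_gcd_not_dvd by (simp add: mult_dvd_mono)
  qed
qed

lemma Atilde_abs_coords:
  assumes "(x, y) \<in> Atilde l1 l2 n2" and "x \<noteq> 0" and "y \<noteq> 0"
  shows "\<bar>x\<bar> \<in> {of_int l2, of_int n2}" and "\<bar>y\<bar> \<in> {of_int l2, of_int n2}"
  using assms real_pythagorean(1-3) by (auto simp: Atilde_eq wave_vector_defs)

lemma rot_phi_p1_notin: "rot \<phi> P1 \<notin> Atilde l1 l2 n2"
  and rot_phi_p4_notin: "rot \<phi> P4 \<notin> Atilde l1 l2 n2"
proof -
  have "real_of_int l1 \<noteq> 2 * of_int n2" "real_of_int l1 \<noteq> 2 * of_int l2"
    using l1_neq_double by linarith+
  then have "\<bar>2 * of_int l2 * of_int n2 / of_int l1\<bar> \<notin> {real_of_int l2, of_int n2}"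
    using real_pythagorean(1-3) by (auto simp: field_simps)
  moreover have "(of_int l2^2 - of_int n2^2) / of_int l1 \<noteq> (0::real)"
    "(of_int n2^2 - of_int l2^2) / of_int l1 \<noteq> (0::real)"
    "2 * of_int l2 * of_int n2 / of_int l1 \<noteq> (0::real)"
    using real_pythagorean(1-3) by (auto simp: power_strict_mono)
  ultimately show "rot \<phi> P1 \<notin> Atilde l1 l2 n2" "rot \<phi> P4 \<notin> Atilde l1 l2 n2"
    unfolding rot_phi_p1 rot_phi_p4 by (metis Atilde_abs_coords(2), metis Atilde_abs_coords(1))
qed

lemma rot_act_phi_emb: "rot_act \<phi> (E z1 z2 0 w2 w3 0) = E w2 w3 z1 0 0 (cnj z2)"
proof (rule rot_act_eqI)
  let ?S = "{Q1, - Q1, Q2, - Q2, P2, - P2, P3, - P3}"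
  show "E z1 z2 0 w2 w3 0 j = E w2 w3 z1 0 0 (cnj z2) (rot \<phi> j)" if "j \<in> ?S" for j
    using that by (auto simp: rot_phi_wave_vectors rot_uminus)
  show "j \<in> ?S" if "E z1 z2 0 w2 w3 0 j \<noteq> 0" for j
    using that by (rule emb_w1_w4_zero_support)
  show "k \<in> rot \<phi> ` ?S" if "E w2 w3 z1 0 0 (cnj z2) k \<noteq> 0" for k
    using emb_w2_w3_zero_support[OF that] by (auto simp: rot_phi_wave_vectors rot_uminus)
qed

lemma Ec_inter_rot_image:
  "Ec l1 l2 n2 \<inter> rot_act (- \<phi>) ` Ec l1 l2 n2 = {E z1 z2 0 w2 w3 0 | z1 z2 w2 w3. True}"
proof (intro equalityI subsetI)
  fix a assume "a \<in> Ec l1 l2 n2 \<inter> rot_act (- \<phi>) ` Ec l1 l2 n2"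
  then obtain b where a: "a \<in> Ec l1 l2 n2" and b: "b \<in> Ec l1 l2 n2" and "a = rot_act (- \<phi>) b"
    by blast
  then have "a k = b (rot \<phi> k)" for k by (simp add: rot_act_def)
  then have "a P1 = 0" "a P4 = 0"
    using Ec_vanishes[OF b] rot_phi_p1_notin rot_phi_p4_notin by simp_all
  then have "a = E (a Q1) (a Q2) 0 (a P2) (a P3) 0" using Ec_eq_emb[OF a] by simp
  then show "a \<in> {E z1 z2 0 w2 w3 0 | z1 z2 w2 w3. True}" by blast
next
  fix a assume "a \<in> {E z1 z2 0 w2 w3 0 | z1 z2 w2 w3. True}"
  then obtain z1 z2 w2 w3 where a: "a = E z1 z2 0 w2 w3 0" by blast
  have "a = rot_act (- \<phi>) (rot_act \<phi> a)" by (simp add: rot_act_rot_act)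
  moreover have "rot_act \<phi> a \<in> Ec l1 l2 n2" unfolding a rot_act_phi_emb by (rule emb_in_Ec)
  ultimately show "a \<in> Ec l1 l2 n2 \<inter> rot_act (- \<phi>) ` Ec l1 l2 n2" using a emb_in_Ec by blast
qed

lemma gamma1_apply:
  "gamma1 Q1 = - Q1" "gamma1 Q2 = Q2" "gamma1 P1 = - P2" "gamma1 P2 = - P1"
  "gamma1 P3 = - P4" "gamma1 P4 = - P3" "gamma1 (- k) = - gamma1 k" "gamma1 (gamma1 k) = k"
  by (auto simp: gamma1_def wave_vector_defs)

lemma gamma2_apply:
  "gamma2 Q1 = Q2" "gamma2 Q2 = Q1" "gamma2 P1 = P3" "gamma2 P2 = - P4"
  "gamma2 P3 = P1" "gamma2 P4 = - P2" "gamma2 (- k) = - gamma2 k" "gamma2 (gamma2 k) = k"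
  by (auto simp: gamma2_def wave_vector_defs)

lemma lin_act_gamma1_emb:
  "lin_act gamma1 (E z1 z2 w1 w2 w3 w4) = E (cnj z1) z2 (cnj w2) (cnj w1) (cnj w4) (cnj w3)"
proof -
  have "gamma1 k \<in> Atilde l1 l2 n2" if "k \<in> Atilde l1 l2 n2" for k
    using that by (auto simp: Atilde_eq gamma1_apply)
  then have "(\<lambda>k. E z1 z2 w1 w2 w3 w4 (gamma1 k)) \<in> Ec l1 l2 n2"
    by (intro Ec_comp[OF emb_in_Ec]) (simp_all add: gamma1_apply, metis gamma1_apply(8))
  from Ec_eq_emb[OF this] show ?thesis by (simp add: lin_act_def gamma1_apply)
qed

lemma lin_act_gamma2_emb:
  "lin_act gamma2 (E z1 z2 w1 w2 w3 w4) = E z2 z1 w3 (cnj w4) w1 (cnj w2)"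
proof -
  have "gamma2 k \<in> Atilde l1 l2 n2" if "k \<in> Atilde l1 l2 n2" for k
    using that by (auto simp: Atilde_eq gamma2_apply)
  then have "(\<lambda>k. E z1 z2 w1 w2 w3 w4 (gamma2 k)) \<in> Ec l1 l2 n2"
    by (intro Ec_comp[OF emb_in_Ec]) (simp_all add: gamma2_apply, metis gamma2_apply(8))
  from Ec_eq_emb[OF this] show ?thesis by (simp add: lin_act_def gamma2_apply)
qed

end

locale Gamma_equivariant_map = pythagorean_modes +
  fixes F :: "wfun \<Rightarrow> wfun"
  assumes F_Ec: "\<forall>a\<in>Ec l1 l2 n2. F a \<in> Ec l1 l2 n2"
    and equivariant: "Gamma_equivariant l1 l2 n2 F"
begin

lemma F_emb_in_Ec: "F (E z1 z2 w1 w2 w3 w4) \<in> Ec l1 l2 n2"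
  using F_Ec emb_in_Ec by blast

lemma F_emb_uminus: "F (E z1 z2 w1 w2 w3 w4) (- k) = cnj (F (E z1 z2 w1 w2 w3 w4) k)"
  by (rule Ec_uminus[OF F_emb_in_Ec])

lemma F_gamma1_emb:
  "F (E z1 z2 w1 w2 w3 w4) (gamma1 k) = F (E (cnj z1) z2 (cnj w2) (cnj w1) (cnj w4) (cnj w3)) k"
proof -
  have "F (lin_act gamma1 (E z1 z2 w1 w2 w3 w4)) = lin_act gamma1 (F (E z1 z2 w1 w2 w3 w4))"
    using equivariant emb_in_Ec unfolding Gamma_equivariant_def by blast
  then have "F (lin_act gamma1 (E z1 z2 w1 w2 w3 w4)) k = F (E z1 z2 w1 w2 w3 w4) (gamma1 k)"
    by (simp add: lin_act_def)
  then show ?thesis by (simp only: lin_act_gamma1_emb)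
qed

lemma F_gamma2_emb:
  "F (E z1 z2 w1 w2 w3 w4) (gamma2 k) = F (E z2 z1 w3 (cnj w4) w1 (cnj w2)) k"
proof -
  have "F (lin_act gamma2 (E z1 z2 w1 w2 w3 w4)) = lin_act gamma2 (F (E z1 z2 w1 w2 w3 w4))"
    using equivariant emb_in_Ec unfolding Gamma_equivariant_def by blast
  then have "F (lin_act gamma2 (E z1 z2 w1 w2 w3 w4)) k = F (E z1 z2 w1 w2 w3 w4) (gamma2 k)"
    by (simp add: lin_act_def)
  then show ?thesis by (simp only: lin_act_gamma2_emb)
qed

lemma F_vanishes_off_resonance:
  assumes "a \<in> Ec l1 l2 n2" and "\<And>k. a k \<noteq> 0 \<Longrightarrow> trans_character s t k = 1"
    and "trans_character s t k0 \<noteq> 1"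
  shows "F a k0 = 0"
proof -
  have "trans_act s t a = a"
    using assms(2) by (force simp: trans_act_eq)
  then have "F a = trans_act s t (F a)"
    using equivariant assms(1) unfolding Gamma_equivariant_def by metis
  then have "F a k0 = trans_character s t k0 * F a k0"
    by (metis trans_act_eq)
  then show ?thesis using assms(3) by (metis mult_cancel_right1)
qed

lemma F_emb_w2_w3_zero_nonresonant:
  fixes N m n u v :: int
  assumes "N \<noteq> 0" and "N dvd m * l1" and "N dvd n * l1"
    and "N dvd m * l2 + n * n2" and "N dvd m * n2 - n * l2"
    and "\<not> N dvd m * u + n * v"
  shows "F (E z1 z2 w1 0 0 w4) (of_int u, of_int v) = 0"
proof (rule F_vanishes_off_resonance[OF emb_in_Ec])
  let ?\<chi> = "trans_character (2 * pi * m / N) (2 * pi * n / N)"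
  note lattice = trans_character_lattice_eq_1_iff[OF assms(1)]
  have "?\<chi> Q1 = 1" using lattice[of m n l1 0] assms(2) by (simp add: q1_def)
  moreover have "?\<chi> Q2 = 1" using lattice[of m n 0 l1] assms(3) by (simp add: q2_def)
  moreover have "?\<chi> P1 = 1" using lattice[of m n l2 n2] assms(4) by (simp add: p1_def)
  moreover have "?\<chi> P4 = 1" using lattice[of m n n2 "- l2"] assms(5) by (simp add: p4_def)
  ultimately show "?\<chi> k = 1" if "E z1 z2 w1 0 0 w4 k \<noteq> 0" for k
    using emb_w2_w3_zero_support[OF that] by (auto simp: trans_character_uminus)
  show "?\<chi> (of_int u, of_int v) \<noteq> 1" using lattice assms(6) by simp
qed

text \<open>The translation by \<open>2\<pi>/N \<cdot> (l2, n2)\<close>, resp. \<open>2\<pi>/N \<cdot> (n2, -l2)\<close>, with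
  \<open>N = l1 gcd(l2, n2)\<close> fixes \<open>q1, q2, p1, p4\<close> but not \<open>p2\<close>, resp. \<open>p3\<close>.\<close>

lemma F_preserves_w2_w3_zero:
  "F (E z1 z2 w1 0 0 w4) P2 = 0" "F (E z1 z2 w1 0 0 w4) P3 = 0"
proof -
  define N where "N = l1 * gcd l2 n2"
  have "N \<noteq> 0" using l2_less_l1 n2_less_l2 n2_pos by (simp add: N_def)
  have l2: "N dvd l2 * l1" and n2: "N dvd n2 * l1"
    by (simp_all add: N_def mult.commute mult_dvd_mono)
  have "N dvd l1 * l1" using gcd_dvd_l1 by (simp add: N_def)
  then have l1: "N dvd l2 * l2 + n2 * n2"
    using pythagorean by (simp add: power2_eq_square)
  have "\<not> N dvd l2 * l2 - n2 * n2"
    using l1_gcd_not_dvd by (simp add: N_def power2_eq_square)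
  then have "\<not> N dvd l2 * l2 + n2 * - n2" "\<not> N dvd n2 * n2 + - l2 * l2"
    by (simp_all add: dvd_minus_iff[of N "l2 * l2 - n2 * n2", symmetric])
  moreover have "N dvd n2 * n2 - - l2 * l2" "N dvd - l2 * l1"
    using l1 l2 by (simp_all add: add.commute)
  ultimately have "F (E z1 z2 w1 0 0 w4) (of_int l2, of_int (- n2)) = 0"
    "F (E z1 z2 w1 0 0 w4) (of_int n2, of_int l2) = 0"
    using F_emb_w2_w3_zero_nonresonant[OF \<open>N \<noteq> 0\<close> l2 n2 l1, where u = l2 and v = "- n2"]
      F_emb_w2_w3_zero_nonresonant[OF \<open>N \<noteq> 0\<close> n2, where n = "- l2" and u = n2 and v = l2]
    by (simp_all add: mult.commute)
  then show "F (E z1 z2 w1 0 0 w4) P2 = 0" "F (E z1 z2 w1 0 0 w4) P3 = 0"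
    by (simp_all add: p2_def p3_def)
qed

lemma F_preserves_w1_w4_zero:
  "F (E z1 z2 0 w2 w3 0) P1 = 0" "F (E z1 z2 0 w2 w3 0) P4 = 0"
  using F_gamma1_emb[of "cnj z1" z2 "cnj w2" 0 0 "cnj w3" P1]
    F_gamma1_emb[of "cnj z1" z2 "cnj w2" 0 0 "cnj w3" P4]
  by (simp_all add: gamma1_apply F_emb_uminus F_preserves_w2_w3_zero)

lemma F_emb_w1_w4_zero_coords:
  "F (E z1 z2 0 w2 w3 0) = E (F (E z1 z2 0 w2 w3 0) Q1) (F (E z1 z2 0 w2 w3 0) Q2) 0
     (F (E z1 z2 0 w2 w3 0) P2) (F (E z1 z2 0 w2 w3 0) P3) 0"
proof -
  have "F (E z1 z2 0 w2 w3 0) = E (F (E z1 z2 0 w2 w3 0) Q1) (F (E z1 z2 0 w2 w3 0) Q2)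
      (F (E z1 z2 0 w2 w3 0) P1) (F (E z1 z2 0 w2 w3 0) P2) (F (E z1 z2 0 w2 w3 0) P3)
      (F (E z1 z2 0 w2 w3 0) P4)"
    by (rule Ec_eq_emb[OF F_emb_in_Ec])
  then show ?thesis by (simp only: F_preserves_w1_w4_zero)
qed

lemma F_emb_w2_w3_zero_coords:
  "F (E z1 z2 w1 0 0 w4) = E (F (E z1 z2 w1 0 0 w4) Q1) (F (E z1 z2 w1 0 0 w4) Q2)
     (F (E z1 z2 w1 0 0 w4) P1) 0 0 (F (E z1 z2 w1 0 0 w4) P4)"
proof -
  have "F (E z1 z2 w1 0 0 w4) = E (F (E z1 z2 w1 0 0 w4) Q1) (F (E z1 z2 w1 0 0 w4) Q2)
      (F (E z1 z2 w1 0 0 w4) P1) (F (E z1 z2 w1 0 0 w4) P2) (F (E z1 z2 w1 0 0 w4) P3)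
      (F (E z1 z2 w1 0 0 w4) P4)"
    by (rule Ec_eq_emb[OF F_emb_in_Ec])
  then show ?thesis by (simp only: F_preserves_w2_w3_zero)
qed

lemma rot_act_phi_commutes_iff:
  "rot_act \<phi> (F (E z1 z2 0 w2 w3 0)) = F (rot_act \<phi> (E z1 z2 0 w2 w3 0)) \<longleftrightarrow>
     F (E z1 z2 0 w2 w3 0) Q1 = F (E w2 w3 z1 0 0 (cnj z2)) P1 \<and>
     F (E z1 z2 0 w2 w3 0) P2 = F (E w2 w3 z1 0 0 (cnj z2)) Q1 \<and>
     F (E z1 z2 0 w2 w3 0) P3 = F (E w2 w3 z1 0 0 (cnj z2)) Q2 \<and>
     cnj (F (E z1 z2 0 w2 w3 0) Q2) = F (E w2 w3 z1 0 0 (cnj z2)) P4"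
proof -
  have "rot_act \<phi> (F (E z1 z2 0 w2 w3 0)) = rot_act \<phi> (E (F (E z1 z2 0 w2 w3 0) Q1)
      (F (E z1 z2 0 w2 w3 0) Q2) 0 (F (E z1 z2 0 w2 w3 0) P2) (F (E z1 z2 0 w2 w3 0) P3) 0)"
    by (rule arg_cong[OF F_emb_w1_w4_zero_coords])
  also have "\<dots> = E (F (E z1 z2 0 w2 w3 0) P2) (F (E z1 z2 0 w2 w3 0) P3)
      (F (E z1 z2 0 w2 w3 0) Q1) 0 0 (cnj (F (E z1 z2 0 w2 w3 0) Q2))"
    by (rule rot_act_phi_emb)
  finally have "rot_act \<phi> (F (E z1 z2 0 w2 w3 0)) = \<dots>" .
  moreover have "F (rot_act \<phi> (E z1 z2 0 w2 w3 0)) = E (F (E w2 w3 z1 0 0 (cnj z2)) Q1)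
      (F (E w2 w3 z1 0 0 (cnj z2)) Q2) (F (E w2 w3 z1 0 0 (cnj z2)) P1) 0 0
      (F (E w2 w3 z1 0 0 (cnj z2)) P4)"
    unfolding rot_act_phi_emb by (rule F_emb_w2_w3_zero_coords)
  ultimately show ?thesis by (auto simp: emb_eq_iff)
qed

lemma rot_act_phi_commutes_if_first_component:
  assumes first: "\<And>z1 z2 w2 w3. F (E z1 z2 0 w2 w3 0) Q1 = F (E w2 w3 z1 0 0 (cnj z2)) P1"
  shows "rot_act \<phi> (F (E z1 z2 0 w2 w3 0)) = F (rot_act \<phi> (E z1 z2 0 w2 w3 0))"
proof -
  have second: "F (E z1 z2 0 w2 w3 0) P2 = F (E w2 w3 z1 0 0 (cnj z2)) Q1" for z1 z2 w2 w3
  proof -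
    have "F (E z1 z2 0 w2 w3 0) P2 = cnj (F (E (cnj z1) z2 (cnj w2) 0 0 (cnj w3)) P1)"
      using F_gamma1_emb[of z1 z2 0 w2 w3 0 "- P1"] by (simp add: gamma1_apply F_emb_uminus)
    also have "\<dots> = cnj (F (E (cnj w2) w3 0 (cnj z1) z2 0) Q1)"
      by (simp add: first)
    also have "\<dots> = cnj (F (E w2 w3 z1 0 0 (cnj z2)) (- Q1))"
      using F_gamma1_emb[of w2 w3 z1 0 0 "cnj z2" Q1] by (simp add: gamma1_apply)
    also have "\<dots> = F (E w2 w3 z1 0 0 (cnj z2)) Q1"
      by (simp add: F_emb_uminus)
    finally show ?thesis .
  qed
  have "F (E z1 z2 0 w2 w3 0) P3 = F (E z2 z1 w3 0 0 (cnj w2)) P1"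
    using F_gamma2_emb[of z1 z2 0 w2 w3 0 P1] by (simp add: gamma2_apply)
  also have "\<dots> = F (E w3 w2 0 z2 z1 0) Q1"
    by (simp add: first)
  also have "\<dots> = F (E w2 w3 z1 0 0 (cnj z2)) Q2"
    using F_gamma2_emb[of w2 w3 z1 0 0 "cnj z2" Q1] by (simp add: gamma2_apply)
  finally have third: "F (E z1 z2 0 w2 w3 0) P3 = F (E w2 w3 z1 0 0 (cnj z2)) Q2" .
  have "F (E z1 z2 0 w2 w3 0) Q2 = F (E z2 z1 w3 0 0 (cnj w2)) Q1"
    using F_gamma2_emb[of z1 z2 0 w2 w3 0 Q1] by (simp add: gamma2_apply)
  also have "\<dots> = F (E w3 w2 0 z2 z1 0) P2"
    by (simp add: second)
  also have "\<dots> = cnj (F (E w2 w3 z1 0 0 (cnj z2)) P4)"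
    using F_gamma2_emb[of w2 w3 z1 0 0 "cnj z2" P2] by (simp add: gamma2_apply F_emb_uminus)
  finally have fourth: "cnj (F (E z1 z2 0 w2 w3 0) Q2) = F (E w2 w3 z1 0 0 (cnj z2)) P4"
    by simp
  show ?thesis
    using first second third fourth by (simp add: rot_act_phi_commutes_iff)
qed

lemma rot_act_phi_commutes_on_inter_iff:
  "(\<forall>\<Phi>\<in>Ec l1 l2 n2 \<inter> rot_act (- \<phi>) ` Ec l1 l2 n2. rot_act \<phi> (F \<Phi>) = F (rot_act \<phi> \<Phi>))
    \<longleftrightarrow> (\<forall>z1 z2 w2 w3. f_comp l1 l2 n2 F z1 z2 0 w2 w3 0 = h_comp l1 l2 n2 F w2 w3 z1 0 0 (cnj z2))"
  unfolding Ec_inter_rot_image f_comp_def h_comp_def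
  using rot_act_phi_commutes_iff rot_act_phi_commutes_if_first_component by blast

end

theorem mainTheorem8:
  fixes l1 l2 n2 :: int and F :: "wfun \<Rightarrow> wfun"
  assumes "l1 > l2" and "l2 > n2" and "n2 > 0" and "l1^2 = l2^2 + n2^2"
    and "\<forall>a\<in>Ec l1 l2 n2. F a \<in> Ec l1 l2 n2"
    and "Gamma_equivariant l1 l2 n2 F"
  shows "Ec l1 l2 n2 \<inter> rot_act (- phi l2 n2) ` Ec l1 l2 n2
           = {emb l1 l2 n2 z1 z2 0 w2 w3 0 | z1 z2 w2 w3. True}
    \<and> ((\<forall>\<Phi>\<in>Ec l1 l2 n2 \<inter> rot_act (- phi l2 n2) ` Ec l1 l2 n2.
            rot_act (phi l2 n2) (F \<Phi>) = F (rot_act (phi l2 n2) \<Phi>))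
        \<longleftrightarrow> (\<forall>z1 z2 w2 w3. f_comp l1 l2 n2 F z1 z2 0 w2 w3 0
                              = h_comp l1 l2 n2 F w2 w3 z1 0 0 (cnj z2)))
    \<and> ((\<forall>\<Phi>\<in>Ec l1 l2 n2 \<inter> rot_act (- phi l2 n2) ` Ec l1 l2 n2.
            rot_act (phi l2 n2) (F \<Phi>) = F (rot_act (phi l2 n2) \<Phi>))
        \<longleftrightarrow> (\<forall>z1 z2 w1 w4. h_comp l1 l2 n2 F z1 z2 w1 0 0 w4
                              = f_comp l1 l2 n2 F w1 (cnj w4) 0 z1 z2 0))"
proof -
  interpret Gamma_equivariant_map l1 l2 n2 F
    using assms by unfold_locales auto
  have "(\<forall>z1 z2 w2 w3. f_comp l1 l2 n2 F z1 z2 0 w2 w3 0 = h_comp l1 l2 n2 F w2 w3 z1 0 0 (cnj z2))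
    \<longleftrightarrow> (\<forall>z1 z2 w1 w4. h_comp l1 l2 n2 F z1 z2 w1 0 0 w4 = f_comp l1 l2 n2 F w1 (cnj w4) 0 z1 z2 0)"
    by (metis complex_cnj_cnj)
  then show ?thesis
    using Ec_inter_rot_image rot_act_phi_commutes_on_inter_iff by simp
qed

end
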